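(* Let $1\le b<\frac{n}{2}-1$ and let $T$ be a tree attaining the maximum value of $M_2$ over $\mathcal{CT}^*_{n,b}$. If $T$ contains a pendent vertex adjacent to a vertex of degree $4$, then $T$ contains no two adjacent vertices of degree $3$.
   Context: A chemical tree is a tree with maximum degree at most $4$. A pendent vertex has degree $1$; a branching vertex has degree greater than $2$. $\mathcal{CT}^*_{n,b}$ is the class of all $n$-vertex chemical trees with exactly $b$ branching vertices. $M_2(G)=\sum_{uv\in E(G)}d_ud_v$, where $d_v$ is the degree of $v$. *)

theory Defs
  imports Complex_Main
begin

definition simple_graph :: "nat set \<Rightarrow> nat set set \<Rightarrow> bool" where
  "simple_graph V E \<longleftrightarrow> finite V \<and> (\<forall>e\<in>E. e \<subseteq> V \<and> card e = 2)"

definition deg :: "nat set set \<Rightarrow> nat \<Rightarrow> nat" where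
  "deg E v = card {e\<in>E. v \<in> e}"

definition adj_rel :: "nat set set \<Rightarrow> (nat \<times> nat) set" where
  "adj_rel E = {(x, y). {x, y} \<in> E}"

definition connected_graph :: "nat set \<Rightarrow> nat set set \<Rightarrow> bool" where
  "connected_graph V E \<longleftrightarrow> (\<forall>u\<in>V. \<forall>v\<in>V. (u, v) \<in> (adj_rel E)\<^sup>*)"

definition is_tree :: "nat set \<Rightarrow> nat set set \<Rightarrow> bool" where
  "is_tree V E \<longleftrightarrow> simple_graph V E \<and> V \<noteq> {} \<and> connected_graph V E
     \<and> card E + 1 = card V"

definition chemical_tree :: "nat set \<Rightarrow> nat set set \<Rightarrow> bool" where
  "chemical_tree V E \<longleftrightarrow> is_tree V E \<and> (\<forall>v\<in>V. deg E v \<le> 4)"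

definition branching_vertices :: "nat set \<Rightarrow> nat set set \<Rightarrow> nat set" where
  "branching_vertices V E = {v\<in>V. deg E v > 2}"

definition CT :: "nat \<Rightarrow> nat \<Rightarrow> (nat set \<times> nat set set) set" where
  "CT n b = {(V, E). chemical_tree V E \<and> card V = n \<and> card (branching_vertices V E) = b}"

definition M2 :: "nat set set \<Rightarrow> nat" where
  "M2 E = (\<Sum>e\<in>E. \<Prod>v\<in>e. deg E v)"

end

theory Submission
  imports Defs
begin

(* Let u be a pendent vertex with neighbour v of degree 4, and let xy be an edge with
   d(x) = d(y) = 3. Deleting the bridge xy splits T into two subtrees; name x and y so that v
   lies in the subtree of y. Replacing the edges uv and xy by vx and yu keeps T connected and
   every degree unchanged, so the result is again a tree in CT*(n,b), while M2 grows by
   (4*3 + 3*1) - (1*4 + 3*3) = 2, contradicting maximality. *)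

lemma adj_rel_iff [simp]: "(a, b) \<in> adj_rel E \<longleftrightarrow> {a, b} \<in> E"
  by (simp add: adj_rel_def)

lemma sym_adj_rel: "sym (adj_rel E)"
  by (auto simp: sym_def insert_commute)

lemma adj_rel_rtrancl_sym: "(a, b) \<in> (adj_rel E)\<^sup>* \<Longrightarrow> (b, a) \<in> (adj_rel E)\<^sup>*"
  using sym_rtrancl[OF sym_adj_rel] by (rule symD)

lemma adj_rel_insert: "adj_rel (insert {p, q} E) = insert (p, q) (insert (q, p) (adj_rel E))"
  by (auto simp: adj_rel_def doubleton_eq_iff)

definition component :: "nat set set \<Rightarrow> nat \<Rightarrow> nat set" where
  "component E a = (adj_rel E)\<^sup>* `` {a}"

lemma mem_component_iff: "b \<in> component E a \<longleftrightarrow> (a, b) \<in> (adj_rel E)\<^sup>*"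
  by (simp add: component_def)

lemma equiv_component: "equiv UNIV ((adj_rel E)\<^sup>*)"
  by (simp add: equiv_def refl_rtrancl sym_rtrancl sym_adj_rel trans_rtrancl)

lemma component_self [simp]: "a \<in> component E a"
  by (simp add: mem_component_iff)

lemma component_sym: "b \<in> component E a \<Longrightarrow> a \<in> component E b"
  by (simp add: mem_component_iff adj_rel_rtrancl_sym)

lemma component_eq: "b \<in> component E a \<Longrightarrow> component E b = component E a"
  unfolding component_def by (rule equiv_class_eq[OF equiv_component]) (simp add: adj_rel_rtrancl_sym)

lemma edge_in_component: "{a, b} \<in> E \<Longrightarrow> b \<in> component E a"
  by (simp add: mem_component_iff r_into_rtrancl)

lemma component_mono: "E \<subseteq> F \<Longrightarrow> component E a \<subseteq> component F a"
  unfolding component_def by (intro Image_mono rtrancl_mono) (auto simp: adj_rel_def)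

lemma component_isolated:
  assumes "\<forall>e\<in>E. u \<notin> e"
  shows "component E u = {u}"
proof -
  have "b = u" if "(u, b) \<in> (adj_rel E)\<^sup>*" for b
    using that by (cases rule: converse_rtranclE) (use assms in auto)
  then show ?thesis
    by (auto simp: mem_component_iff)
qed

lemma component_insert_edge:
  "component (insert {p, q} E) a =
     (if p \<in> component E a \<or> q \<in> component E a then component E p \<union> component E q
      else component E a)"
  unfolding component_def adj_rel_insert
  by (auto simp: rtrancl_insert intro: rtrancl_trans dest: adj_rel_rtrancl_sym)

lemma component_subset: "component E a \<subseteq> insert a (\<Union>E)"
proof
  fix b assume "b \<in> component E a"
  then have "(a, b) \<in> (adj_rel E)\<^sup>*"
    by (simp add: mem_component_iff)
  then show "b \<in> insert a (\<Union>E)"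
    by (induction rule: rtrancl_induct) auto
qed

lemma finite_component:
  assumes "finite E" and "\<forall>e\<in>E. finite e"
  shows "finite (component E a)"
  using component_subset by (rule finite_subset) (use assms in auto)

lemma card_component_le:
  assumes "finite E" and "\<forall>e\<in>E. card e = 2"
  shows "card (component E a) \<le> card {e \<in> E. e \<subseteq> component E a} + 1"
  using assms
proof (induction E arbitrary: a rule: finite_induct)
  case empty
  then show ?case
    by (simp add: component_def adj_rel_def)
next
  case (insert e E)
  then obtain p q where e: "e = {p, q}"
    by (meson card_2_iff insertI1)
  have IH: "card (component E c) \<le> card {e \<in> E. e \<subseteq> component E c} + 1" for c
    using insert by simp
  have fin: "finite (component E c)" for c
    using insert by (intro finite_component) (auto intro: card_ge_0_finite)
  let ?within = "\<lambda>F K. {e' \<in> F. e' \<subseteq> K}"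
  show ?case
  proof (cases "p \<in> component E a \<or> q \<in> component E a")
    case False
    then have K: "component (insert e E) a = component E a" and "\<not> e \<subseteq> component E a"
      by (simp_all add: e component_insert_edge)
    then have "?within (insert e E) (component (insert e E) a) = ?within E (component E a)"
      by auto
    then show ?thesis
      using IH[of a] K by simp
  next
    case True
    then have K: "component (insert e E) a = component E p \<union> component E q"
      by (simp add: e component_insert_edge)
    have fin_within: "finite (?within (insert e E) K)" for K
      using insert.hyps(1) by simp
    show ?thesis
    proof (cases "q \<in> component E p")
      case True
      then have K': "component (insert e E) a = component E p"
        using K component_eq by auto
      have "card (component E p) \<le> card (?within E (component E p)) + 1"
        by (rule IH)
      also have "card (?within E (component E p)) \<le> card (?within (insert e E) (component E p))"
        by (rule card_mono[OF fin_within]) auto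
      finally show ?thesis
        using K' by simp
    next
      case False
      let ?Ip = "?within E (component E p)" and ?Iq = "?within E (component E q)"
      have disj: "component E p \<inter> component E q = {}"
        using False disjnt_equiv_class[OF equiv_component] by (simp add: component_def disjnt_def)
      moreover have "{} \<notin> E"
        using insert.prems by auto
      ultimately have "?Ip \<inter> ?Iq = {}"
        by (metis (no_types, lifting) Int_greatest disjoint_iff mem_Collect_eq subset_empty)
      moreover have "e \<notin> ?Ip \<union> ?Iq"
        using insert.hyps(2) by simp
      ultimately have card_within: "card (insert e (?Ip \<union> ?Iq)) = card ?Ip + card ?Iq + 1"
        using insert.hyps(1) by (simp add: card_Un_disjoint)
      have "insert e (?Ip \<union> ?Iq) \<subseteq> ?within (insert e E) (component (insert e E) a)"
        using K e by auto
      then have within_le: "card (insert e (?Ip \<union> ?Iq)) \<le> card (?within (insert e E) (component (insert e E) a))"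
        by (rule card_mono[OF fin_within])
      have "card (component (insert e E) a) = card (component E p) + card (component E q)"
        using K disj fin by (simp add: card_Un_disjoint)
      also have "\<dots> \<le> card (insert e (?Ip \<union> ?Iq)) + 1"
        using IH[of p] IH[of q] card_within by simp
      also have "\<dots> \<le> card (?within (insert e E) (component (insert e E) a)) + 1"
        using within_le by simp
      finally show ?thesis .
    qed
  qed
qed

lemma component_Diff_edge:
  "component E a \<subseteq> component (E - {{p, q}}) a \<union> component (E - {{p, q}}) p \<union> component (E - {{p, q}}) q"
proof (cases "{p, q} \<in> E")
  case True
  then show ?thesis
    using component_insert_edge[of p q "E - {{p, q}}" a] by (simp add: insert_absorb) blast
next
  case False
  then show ?thesis
    by (simp add: Un_assoc le_supI1)
qed

lemma connected_graph_component:
  "connected_graph V E \<Longrightarrow> a \<in> V \<Longrightarrow> V \<subseteq> component E a"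
  by (auto simp: connected_graph_def mem_component_iff)

lemma connected_graphI: "V \<subseteq> component E a \<Longrightarrow> connected_graph V E"
  unfolding connected_graph_def by (metis component_eq mem_component_iff subsetD)

lemma connected_graph_Diff_edge_sides:
  assumes "connected_graph V E" and "x \<in> V" and "v \<in> V"
  shows "v \<in> component (E - {{x, y}}) x \<or> v \<in> component (E - {{x, y}}) y"
proof -
  have "v \<in> component E x"
    using connected_graph_component[OF assms(1,2)] assms(3) by blast
  then show ?thesis
    using component_Diff_edge[of E x x y] by auto
qed

lemma simple_graph_finite_edges: "simple_graph V E \<Longrightarrow> finite E"
  unfolding simple_graph_def by (meson Pow_iff finite_Pow_iff finite_subset subsetI)

lemma tree_edge_bridge:
  assumes tree: "is_tree V E" and xy: "{x, y} \<in> E"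
  shows "y \<notin> component (E - {{x, y}}) x"
proof
  let ?F = "E - {{x, y}}"
  assume y: "y \<in> component ?F x"
  have simple: "simple_graph V E" and conn: "connected_graph V E" and card: "card E + 1 = card V"
    using tree by (simp_all add: is_tree_def)
  have finE: "finite E"
    using simple by (rule simple_graph_finite_edges)
  have edges: "\<forall>e\<in>E. e \<subseteq> V \<and> card e = 2"
    using simple by (simp add: simple_graph_def)
  have x: "x \<in> V"
    using edges xy by auto
  have "component E x = component ?F x \<union> component ?F y"
    using component_insert_edge[of x y ?F x] xy by (simp add: insert_absorb)
  also have "\<dots> = component ?F x"
    using component_eq[OF y] by simp
  finally have "V \<subseteq> component ?F x"
    using connected_graph_component[OF conn x] by simp
  moreover have "component ?F x \<subseteq> V"
    using component_subset[of ?F x] edges x by blast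
  ultimately have V: "component ?F x = V"
    by blast
  have "card V \<le> card {e \<in> ?F. e \<subseteq> V} + 1"
    using card_component_le[of ?F x] finE edges V by simp
  also have "\<dots> \<le> card ?F + 1"
    using finE by (intro add_right_mono card_mono) auto
  also have "\<dots> < card V"
    using card finE xy card_gt_0_iff[of E] by (auto simp: card_Diff_singleton)
  finally show False
    by simp
qed

lemma tree_edge_side_not_adjacent:
  assumes tree: "is_tree V E" and xy: "{x, y} \<in> E"
    and side: "v \<in> component (E - {{x, y}}) y" and "v \<noteq> y"
  shows "{v, x} \<notin> E"
proof
  let ?F = "E - {{x, y}}"
  assume "{v, x} \<in> E"
  with \<open>v \<noteq> y\<close> have "v \<in> component ?F x"
    by (intro edge_in_component) (auto simp: insert_commute doubleton_eq_iff)
  then have "y \<in> component ?F x"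
    using component_sym[OF side] component_eq by blast
  then show False
    using tree_edge_bridge[OF tree xy] by contradiction
qed

lemma deg_eq_sum:
  assumes "finite E"
  shows "deg E w = (\<Sum>e\<in>E. if w \<in> e then 1 else 0)"
proof -
  have "deg E w = (\<Sum>e\<in>{e \<in> E. w \<in> e}. 1)"
    unfolding deg_def by (rule card_eq_sum)
  also have "\<dots> = (\<Sum>e\<in>E. if w \<in> e then 1 else 0)"
    using assms by (rule sum.inter_filter)
  finally show ?thesis .
qed

lemma deg_one_edge:
  assumes "deg E u = 1" and "{u, v} \<in> E" and "e \<in> E" and "u \<in> e"
  shows "e = {u, v}"
proof -
  obtain f where f: "{e \<in> E. u \<in> e} = {f}"
    using assms(1) unfolding deg_def by (rule card_1_singletonE)
  have "e \<in> {e \<in> E. u \<in> e}" and "{u, v} \<in> {e \<in> E. u \<in> e}"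
    using assms(2-4) by simp_all
  then show ?thesis
    unfolding f by simp
qed

definition switch_edges :: "nat \<Rightarrow> nat \<Rightarrow> nat \<Rightarrow> nat \<Rightarrow> nat set set \<Rightarrow> nat set set" where
  "switch_edges u v x y E = insert {v, x} (insert {y, u} (E - {{u, v}, {x, y}}))"

context
  fixes E :: "nat set set" and u v x y :: nat
  assumes finite: "finite E"
    and old_edges: "{u, v} \<in> E" "{x, y} \<in> E"
    and new_edges: "{v, x} \<notin> E" "{y, u} \<notin> E"
    and distinct: "distinct [u, v, x, y]"
begin

lemma sum_switch_edges:
  fixes f :: "nat set \<Rightarrow> 'a::comm_monoid_add"
  shows "sum f (switch_edges u v x y E) + f {u, v} + f {x, y} = sum f E + f {v, x} + f {y, u}"
proof -
  define D where "D = E - {{u, v}, {x, y}}"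
  have E: "E = insert {u, v} (insert {x, y} D)"
    using old_edges unfolding D_def by blast
  have ne: "{u, v} \<noteq> {x, y}" "{v, x} \<noteq> {y, u}"
    using distinct by (auto simp: doubleton_eq_iff)
  have D: "finite D" "{u, v} \<notin> D" "{x, y} \<notin> D" "{v, x} \<notin> D" "{y, u} \<notin> D"
    using finite new_edges by (auto simp: D_def)
  have "sum f E = f {u, v} + f {x, y} + sum f D"
    using ne D by (subst E) (simp add: add.assoc)
  moreover have "sum f (switch_edges u v x y E) = f {v, x} + f {y, u} + sum f D"
    using ne D by (simp add: switch_edges_def D_def[symmetric] add.assoc)
  ultimately show ?thesis
    by (simp add: algebra_simps)
qed

lemma card_switch_edges: "card (switch_edges u v x y E) = card E"
  using sum_switch_edges[of "\<lambda>_. 1::nat"] by simp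

lemma deg_switch_edges: "deg (switch_edges u v x y E) = deg E"
proof
  fix w :: nat
  let ?ind = "\<lambda>e. if w \<in> e then 1 else 0 :: nat"
  have "finite (switch_edges u v x y E)"
    using finite by (simp add: switch_edges_def)
  moreover have "?ind {u, v} + ?ind {x, y} = ?ind {v, x} + ?ind {y, u}"
    using distinct by auto
  ultimately show "deg (switch_edges u v x y E) w = deg E w"
    using sum_switch_edges[of ?ind] finite by (simp add: deg_eq_sum)
qed

lemma M2_switch_edges:
  "M2 (switch_edges u v x y E) + deg E u * deg E v + deg E x * deg E y
     = M2 E + deg E v * deg E x + deg E y * deg E u"
  using sum_switch_edges[of "\<lambda>e. \<Prod>w\<in>e. deg E w"] distinct
  by (simp add: M2_def deg_switch_edges)

end

lemma connected_graph_switch_edges: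
  assumes conn: "connected_graph V E" and "v \<in> V"
    and leaf: "deg E u = 1" "{u, v} \<in> E"
    and side: "v \<in> component (E - {{x, y}}) y" and "y \<noteq> u"
  shows "connected_graph V (switch_edges u v x y E)"
proof -
  let ?E' = "switch_edges u v x y E" and ?F = "E - {{x, y}}"
  define D where "D = E - {{u, v}, {x, y}}"
  have D_eq: "D = ?F - {{u, v}}"
    unfolding D_def by blast
  have D_sub: "D \<subseteq> ?E'"
    unfolding switch_edges_def D_def by (intro subset_insertI2 subset_insertI)
  have "u \<notin> e" if "e \<in> D" for e
    using that deg_one_edge[OF leaf, of e] by (auto simp: D_def)
  then have u_isolated: "component D u = {u}"
    by (simp add: component_isolated)
  have F_sub: "component ?F s \<subseteq> component D s \<union> component D u \<union> component D v" for s
    unfolding D_eq by (rule component_Diff_edge)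
  have "y \<in> component D v"
    using F_sub[of v] component_sym[OF side] u_isolated \<open>y \<noteq> u\<close> by blast
  then have "y \<in> component ?E' v"
    using component_mono[OF D_sub] by blast
  moreover have "x \<in> component ?E' v" and "u \<in> component ?E' y"
    by (simp_all add: edge_in_component switch_edges_def)
  ultimately have "s \<in> component ?E' v" if "s \<in> {v, x, y, u}" for s
    using that component_eq by auto
  then have D_reach: "component D s \<subseteq> component ?E' v" if "s \<in> {v, x, y, u}" for s
    using that component_mono[OF D_sub, of s] component_eq by blast
  have "V \<subseteq> component E v"
    using connected_graph_component[OF conn \<open>v \<in> V\<close>] .
  also have "\<dots> \<subseteq> component ?F v \<union> component ?F x \<union> component ?F y"
    by (rule component_Diff_edge)
  also have "\<dots> \<subseteq> component ?E' v"
    using F_sub[of v] F_sub[of x] F_sub[of y] D_reach by blast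
  finally show ?thesis
    by (rule connected_graphI)
qed

lemma switch_edges_in_CT:
  assumes CT: "(V, E) \<in> CT n b"
    and old_edges: "{u, v} \<in> E" "{x, y} \<in> E"
    and new_edges: "{v, x} \<notin> E" "{y, u} \<notin> E"
    and distinct: "distinct [u, v, x, y]" and leaf: "deg E u = 1"
    and side: "v \<in> component (E - {{x, y}}) y"
  shows "(V, switch_edges u v x y E) \<in> CT n b"
proof -
  have simple: "simple_graph V E" and conn: "connected_graph V E"
    using CT by (auto simp: CT_def chemical_tree_def is_tree_def)
  have fin: "finite E"
    using simple by (rule simple_graph_finite_edges)
  have "u \<in> V" "v \<in> V" "x \<in> V" "y \<in> V"
    using simple old_edges by (auto simp: simple_graph_def)
  then have "simple_graph V (switch_edges u v x y E)"
    using simple distinct by (auto simp: simple_graph_def switch_edges_def)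
  moreover have "connected_graph V (switch_edges u v x y E)"
    using conn \<open>v \<in> V\<close> leaf old_edges(1) side distinct by (intro connected_graph_switch_edges) auto
  ultimately show ?thesis
    using CT card_switch_edges[OF fin old_edges new_edges distinct]
      deg_switch_edges[OF fin old_edges new_edges distinct]
    by (simp add: CT_def chemical_tree_def is_tree_def branching_vertices_def)
qed

theorem lemma11:
  fixes n b :: nat and V :: "nat set" and E :: "nat set set"
  assumes "1 \<le> b" and "real b < real n / 2 - 1"
    and "(V, E) \<in> CT n b"
    and "\<forall>(V', E') \<in> CT n b. M2 E' \<le> M2 E"
    and "\<exists>u v. {u, v} \<in> E \<and> deg E u = 1 \<and> deg E v = 4"
  shows "\<not> (\<exists>x y. {x, y} \<in> E \<and> deg E x = 3 \<and> deg E y = 3)"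
proof
  assume "\<exists>x y. {x, y} \<in> E \<and> deg E x = 3 \<and> deg E y = 3"
  then obtain x0 y0 where xy0: "{x0, y0} \<in> E" "deg E x0 = 3" "deg E y0 = 3"
    by blast
  obtain u v where uv: "{u, v} \<in> E" "deg E u = 1" "deg E v = 4"
    using assms(5) by blast
  have tree: "is_tree V E"
    using assms(3) by (simp add: CT_def chemical_tree_def)
  then have simple: "simple_graph V E" and conn: "connected_graph V E"
    by (simp_all add: is_tree_def)
  have "v \<in> component (E - {{x0, y0}}) x0 \<or> v \<in> component (E - {{x0, y0}}) y0"
    using simple uv(1) xy0(1) by (intro connected_graph_Diff_edge_sides[OF conn]) (auto simp: simple_graph_def)
  then obtain x y where xy: "{x, y} \<in> E" "deg E x = 3" "deg E y = 3"
    and side: "v \<in> component (E - {{x, y}}) y"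
    using xy0 by (metis insert_commute)
  have "card {x, y} = 2"
    using simple xy(1) by (simp add: simple_graph_def)
  then have distinct: "distinct [u, v, x, y]"
    using uv xy by auto
  have new_edges: "{v, x} \<notin> E" "{y, u} \<notin> E"
    using tree_edge_side_not_adjacent[OF tree xy(1) side] deg_one_edge[OF uv(2,1)] distinct
    by (auto simp: doubleton_eq_iff)
  have "(V, switch_edges u v x y E) \<in> CT n b"
    using switch_edges_in_CT[OF assms(3) uv(1) xy(1) new_edges distinct uv(2) side] .
  moreover have "M2 (switch_edges u v x y E) = M2 E + 2"
    using M2_switch_edges[OF simple_graph_finite_edges[OF simple] uv(1) xy(1) new_edges distinct]
      uv xy by simp
  ultimately show False
    using assms(4) by fastforce
qed

end
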